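(* Consider the censored multi-armed bandit setting with $\mathcal A_t=[d]$ for all $t$, fix $\lambda>0$ and $\alpha\in(0,1]$, and let $\psi_\alpha(x)=\frac{x^{1-\alpha}}{1-\alpha}$ if $\alpha<1$ and $\psi_1(x)=\log x$. Let $\Pi_{\mathrm{off}}$ be the class of offline policies, i.e. those whose action sequence $(a_1,\dots,a_T)$ is chosen in advance, without observing any censorship indicators. Then, as $T\to\infty$, $$\max_{\pi\in\Pi_{\mathrm{off}}}\mathbb{E}[\mathbb V_\alpha(T,\pi)]\sim d_{\mathrm{eff}}\,\psi_\alpha\Big(\frac{T}{d_{\mathrm{eff}}}+\lambda\Big),$$ where $\mathbb V_\alpha(T,\pi)=\sum_{t=1}^T(N_{a_t}(t-1)+\lambda)^{-\alpha}$.
   Context: Censored multi-armed bandit setting: $d\ge1$ arms; at each round $t=1,\dots,T$ the agent picks $a_t\in[d]$ and a censorship indicator $x_{a_t}\sim\mathrm{Bernoulli}(p_{a_t})$ is drawn independently of everything else given $a_t$, with fixed $p_a\in(0,1]$. $N_a(t)=\#\{l\le t:a_l=a,\ x_{a_l}=1\}$ and $d_{\mathrm{eff}}=\sum_{a\in[d]}1/p_a$. *)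

theory Defs
  imports "HOL-Probability.Probability" "HOL-Library.Landau_Symbols"
begin

text \<open>Arms are 1..d; rounds are 1..T. An offline policy is an action sequence
  a : {1..T} -> {1..d} fixed in advance. Censorship indicators x l for l in {1..T}
  are independent Bernoulli(p (a l)).\<close>

definition psi :: "real \<Rightarrow> real \<Rightarrow> real" where
  "psi \<alpha> x = (if \<alpha> < 1 then x powr (1 - \<alpha>) / (1 - \<alpha>) else ln x)"

definition d_eff :: "nat \<Rightarrow> (nat \<Rightarrow> real) \<Rightarrow> real" where
  "d_eff d p = (\<Sum>a\<in>{1..d}. 1 / p a)"

definition cnt :: "(nat \<Rightarrow> nat) \<Rightarrow> (nat \<Rightarrow> bool) \<Rightarrow> nat \<Rightarrow> nat \<Rightarrow> nat" where
  "cnt a x b s = card {l \<in> {1..s}. a l = b \<and> x l}"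

definition V :: "real \<Rightarrow> real \<Rightarrow> nat \<Rightarrow> (nat \<Rightarrow> nat) \<Rightarrow> (nat \<Rightarrow> bool) \<Rightarrow> real" where
  "V \<alpha> lam T a x = (\<Sum>t=1..T. (real (cnt a x (a t) (t - 1)) + lam) powr (- \<alpha>))"

definition censor_pmf :: "(nat \<Rightarrow> real) \<Rightarrow> nat \<Rightarrow> (nat \<Rightarrow> nat) \<Rightarrow> (nat \<Rightarrow> bool) pmf" where
  "censor_pmf p T a = Pi_pmf {1..T} False (\<lambda>l. bernoulli_pmf (p (a l)))"

definition expected_V :: "(nat \<Rightarrow> real) \<Rightarrow> real \<Rightarrow> real \<Rightarrow> nat \<Rightarrow> (nat \<Rightarrow> nat) \<Rightarrow> real" where
  "expected_V p \<alpha> lam T a = measure_pmf.expectation (censor_pmf p T a) (V \<alpha> lam T a)"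

definition offline_policies :: "nat \<Rightarrow> nat \<Rightarrow> (nat \<Rightarrow> nat) set" where
  "offline_policies d T = ({1..T} \<rightarrow>\<^sub>E {1..d})"

definition max_offline :: "nat \<Rightarrow> (nat \<Rightarrow> real) \<Rightarrow> real \<Rightarrow> real \<Rightarrow> nat \<Rightarrow> real" where
  "max_offline d p \<alpha> lam T = Max (expected_V p \<alpha> lam T ` offline_policies d T)"

end

theory Submission
  imports Defs "HOL-Real_Asymp.Real_Asymp"
begin

text \<open>Fix an offline policy and let arm \<open>b\<close> be pulled \<open>n\<^sub>b\<close> times. A pull of \<open>b\<close> preceded
  by \<open>k\<close> earlier pulls of \<open>b\<close> contributes \<open>E (X + \<lambda>) powr -\<alpha>\<close> with \<open>X\<close> binomial with parameters \<open>k\<close>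
  and \<open>p\<^sub>b\<close>. Jensen's inequality for the convex map \<open>x powr -\<alpha>\<close> bounds this below by
  \<open>(p\<^sub>b k + \<lambda>) powr -\<alpha>\<close>; an exponential Markov bound on the event \<open>X < \<theta> p\<^sub>b k\<close>
  bounds it above by \<open>(\<theta> p\<^sub>b k + \<lambda>) powr -\<alpha>\<close> plus a geometrically decaying term.
  Since \<open>psi' x = x powr -\<alpha>\<close>, summing over \<open>k < n\<^sub>b\<close> gives
  \<open>psi (q n\<^sub>b + \<lambda>) / q + O(1)\<close> with \<open>q = p\<^sub>b\<close> resp. \<open>q = \<theta> p\<^sub>b\<close>. As \<open>psi\<close> is
  concave and \<open>\<Sum>\<^sub>b n\<^sub>b = T\<close>, the best allocation is \<open>n\<^sub>b \<approx> T / (d_eff p\<^sub>b)\<close>, which yields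
  \<open>d_eff psi (T / d_eff + \<lambda>)\<close> up to an additive constant from below and up to a factor
  \<open>1 / \<theta>\<close> plus a constant from above. Since this grows without bound, letting \<open>\<theta> \<rightarrow> 1\<close> gives
  the asymptotic equivalence.\<close>

section \<open>The function psi\<close>

lemma psi_has_real_derivative:
  assumes "0 < \<alpha>" "\<alpha> \<le> 1" "x > 0"
  shows "(psi \<alpha> has_real_derivative x powr -\<alpha>) (at x)"
proof (cases "\<alpha> < 1")
  case True
  have "((\<lambda>y. y powr (1 - \<alpha>) / (1 - \<alpha>)) has_real_derivative (1 - \<alpha>) * x powr (1 - \<alpha> - 1) / (1 - \<alpha>)) (at x)"
    using assms by (intro DERIV_cdivide has_real_derivative_powr) auto
  moreover have "psi \<alpha> = (\<lambda>y. y powr (1 - \<alpha>) / (1 - \<alpha>))"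
    using True by (simp add: psi_def fun_eq_iff)
  ultimately show ?thesis using True by simp
next
  case False
  then have "\<alpha> = 1" "psi \<alpha> = ln" using assms by (auto simp: psi_def fun_eq_iff)
  then show ?thesis using assms by (auto intro!: derivative_eq_intros simp: powr_minus_divide)
qed

lemma psi_le_tangent:
  assumes "0 < \<alpha>" "\<alpha> \<le> 1" "x > 0" "y > 0"
  shows "psi \<alpha> y \<le> psi \<alpha> x + x powr -\<alpha> * (y - x)"
proof -
  have "- (x powr -\<alpha>) * (y - x) \<le> (\<lambda>z. - psi \<alpha> z) y - (\<lambda>z. - psi \<alpha> z) x"
    by (rule f''_imp_f'[where C = "{0<..}" and f'' = "\<lambda>z. \<alpha> * z powr (-\<alpha> - 1)"])
       (use assms in \<open>auto intro!: derivative_eq_intros psi_has_real_derivative\<close>)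
  then show ?thesis by (simp add: algebra_simps)
qed

lemma concave_on_psi:
  assumes "0 < \<alpha>" "\<alpha> \<le> 1"
  shows "concave_on {0<..} (psi \<alpha>)"
  by (rule f''_le0_imp_concave[where f' = "\<lambda>z. z powr -\<alpha>" and f'' = "\<lambda>z. - \<alpha> * z powr (-\<alpha> - 1)"])
     (use assms in \<open>auto intro!: derivative_eq_intros psi_has_real_derivative\<close>)

lemma psi_mono:
  assumes "0 < \<alpha>" "\<alpha> \<le> 1" "x > 0" "x \<le> y"
  shows "psi \<alpha> x \<le> psi \<alpha> y"
proof -
  have "y powr -\<alpha> * (x - y) \<le> 0" using assms by (simp add: mult_nonneg_nonpos)
  then show ?thesis using psi_le_tangent[of \<alpha> y x] assms by simp
qed

lemma powr_neg_ge_tangent: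
  fixes \<alpha> w z :: real
  assumes "0 < \<alpha>" "w > 0" "z > 0"
  shows "w powr -\<alpha> - \<alpha> * w powr (-\<alpha> - 1) * (z - w) \<le> z powr -\<alpha>"
proof -
  have "(- \<alpha> * w powr (-\<alpha> - 1)) * (z - w) \<le> z powr -\<alpha> - w powr -\<alpha>"
    by (rule f''_imp_f'[where C = "{0<..}" and f'' = "\<lambda>x. \<alpha> * (\<alpha> + 1) * x powr (-\<alpha> - 2)"])
       (use assms in \<open>auto intro!: derivative_eq_intros simp: algebra_simps\<close>)
  then show ?thesis by (simp add: algebra_simps)
qed

lemma filterlim_psi_at_top:
  assumes "0 < \<alpha>" "\<alpha> \<le> 1"
  shows "filterlim (psi \<alpha>) at_top at_top"
proof (cases "\<alpha> < 1")
  case True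
  have "filterlim (\<lambda>x::real. x powr (1 - \<alpha>) / (1 - \<alpha>)) at_top at_top"
    using True by real_asymp
  moreover have "psi \<alpha> = (\<lambda>x. x powr (1 - \<alpha>) / (1 - \<alpha>))"
    using True by (simp add: psi_def fun_eq_iff)
  ultimately show ?thesis by simp
next
  case False
  then have "psi \<alpha> = ln" using assms by (simp add: psi_def fun_eq_iff)
  then show ?thesis by (simp add: ln_at_top)
qed

lemma psi_weighted_jensen:
  assumes "0 < \<alpha>" "\<alpha> \<le> 1" "finite I" "I \<noteq> {}"
    and "\<And>i. i \<in> I \<Longrightarrow> w i > 0" "\<And>i. i \<in> I \<Longrightarrow> y i > 0"
  shows "(\<Sum>i\<in>I. w i * psi \<alpha> (y i)) \<le> sum w I * psi \<alpha> ((\<Sum>i\<in>I. w i * y i) / sum w I)"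
proof -
  have W: "sum w I > 0" using assms by (intro sum_pos) auto
  have "(\<Sum>i\<in>I. w i / sum w I * psi \<alpha> (y i)) \<le> psi \<alpha> (\<Sum>i\<in>I. (w i / sum w I) *\<^sub>R y i)"
    using assms W
    by (intro concave_on_sum[where C = "{0<..}"] concave_on_psi)
       (auto simp: sum_divide_distrib[symmetric] less_imp_le)
  then show ?thesis
    using W by (simp add: sum_divide_distrib[symmetric] pos_divide_le_eq mult.commute)
qed

lemma sum_powr_arith_ge_psi:
  assumes "0 < \<alpha>" "\<alpha> \<le> 1" "q > 0" "lam > 0"
  shows "(psi \<alpha> (q * real n + lam) - psi \<alpha> lam) / q \<le> (\<Sum>k<n. (q * real k + lam) powr -\<alpha>)"
proof (induction n)
  case (Suc n)
  have "psi \<alpha> (q * real (Suc n) + lam) \<le> psi \<alpha> (q * real n + lam) + (q * real n + lam) powr -\<alpha> * q"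
    using psi_le_tangent[of \<alpha> "q * real n + lam" "q * real (Suc n) + lam"] assms
          add_nonneg_pos[of "q * real n" lam] add_nonneg_pos[of "q * real (Suc n)" lam]
    by (simp add: algebra_simps)
  then show ?case using Suc assms by (simp add: field_simps)
qed simp

lemma sum_powr_arith_Suc_le_psi:
  assumes "0 < \<alpha>" "\<alpha> \<le> 1" "q > 0" "lam > 0"
  shows "(\<Sum>k<n. (q * real (Suc k) + lam) powr -\<alpha>) \<le> (psi \<alpha> (q * real n + lam) - psi \<alpha> lam) / q"
proof (induction n)
  case (Suc n)
  have "psi \<alpha> (q * real n + lam) \<le> psi \<alpha> (q * real (Suc n) + lam) + (q * real (Suc n) + lam) powr -\<alpha> * (- q)"
    using psi_le_tangent[of \<alpha> "q * real (Suc n) + lam" "q * real n + lam"] assms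
          add_nonneg_pos[of "q * real n" lam] add_nonneg_pos[of "q * real (Suc n)" lam]
    by (simp add: algebra_simps)
  then show ?case using Suc assms by (simp add: field_simps)
qed simp

lemma sum_powr_arith_le_psi:
  assumes "0 < \<alpha>" "\<alpha> \<le> 1" "q > 0" "lam > 0"
  shows "(\<Sum>k<n. (q * real k + lam) powr -\<alpha>) \<le> lam powr -\<alpha> + (psi \<alpha> (q * real n + lam) - psi \<alpha> lam) / q"
proof (cases n)
  case (Suc m)
  have "psi \<alpha> (q * real m + lam) \<le> psi \<alpha> (q * real n + lam)"
    using assms Suc by (intro psi_mono) (auto simp: add_nonneg_pos)
  then have "(\<Sum>k<m. (q * real (Suc k) + lam) powr -\<alpha>) \<le> (psi \<alpha> (q * real n + lam) - psi \<alpha> lam) / q"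
    using sum_powr_arith_Suc_le_psi[OF assms, of m] assms by (smt (verit) divide_right_mono)
  then show ?thesis unfolding Suc sum.lessThan_Suc_shift by simp
qed simp

section \<open>Rounds grouped by arm\<close>

definition pulls :: "(nat \<Rightarrow> nat) \<Rightarrow> nat \<Rightarrow> nat \<Rightarrow> nat" where
  "pulls a b s = card {l \<in> {1..s}. a l = b}"

lemma pulls_0 [simp]: "pulls a b 0 = 0"
  by (simp add: pulls_def)

lemma pulls_Suc: "pulls a b (Suc s) = pulls a b s + (if a (Suc s) = b then 1 else 0)"
proof -
  have "{l \<in> {1..Suc s}. a l = b} = (if a (Suc s) = b then insert (Suc s) else id) {l \<in> {1..s}. a l = b}"
    by (auto simp: le_Suc_eq)
  then show ?thesis by (simp add: pulls_def)
qed

lemma pulls_fun_upd_beyond: "s < t \<Longrightarrow> pulls (a(t := c)) b s = pulls a b s"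
  unfolding pulls_def by (rule arg_cong[where f = card]) auto

lemma sum_rounds_by_arm:
  assumes "a ` {1..T} \<subseteq> B" "finite B"
  shows "(\<Sum>t=1..T. f (a t) (pulls a (a t) (t - 1))) = (\<Sum>b\<in>B. \<Sum>k < pulls a b T. f b k)"
  using assms(1)
proof (induction T)
  case (Suc T)
  have "(\<Sum>b\<in>B. \<Sum>k < pulls a b (Suc T). f b k)
      = (\<Sum>b\<in>B. \<Sum>k < pulls a b T. f b k) + (\<Sum>b\<in>B. if a (Suc T) = b then f b (pulls a b T) else 0)"
    unfolding sum.distrib[symmetric] by (intro sum.cong refl) (simp add: pulls_Suc)
  also have "(\<Sum>b\<in>B. if a (Suc T) = b then f b (pulls a b T) else 0) = f (a (Suc T)) (pulls a (a (Suc T)) T)"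
    using Suc.prems assms(2) by (simp add: sum.delta image_subset_iff)
  moreover have "a ` {1..T} \<subseteq> B" using Suc.prems by auto
  ultimately show ?case using Suc.IH by simp
qed simp

lemma offline_policy_arm: "a \<in> offline_policies d T \<Longrightarrow> l \<in> {1..T} \<Longrightarrow> a l \<in> {1..d}"
  by (auto simp: offline_policies_def)

lemma finite_offline_policies: "finite (offline_policies d T)"
  by (simp add: offline_policies_def finite_PiE)

lemma sum_pulls_offline_policy:
  assumes "a \<in> offline_policies d T"
  shows "(\<Sum>b\<in>{1..d}. pulls a b T) = T"
proof -
  have "a ` {1..T} \<subseteq> {1..d}" using offline_policy_arm[OF assms] by blast
  then show ?thesis using sum_rounds_by_arm[of a T "{1..d}" "\<lambda>_ _. 1::nat"] by simp
qed

lemma offline_policy_fun_upd: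
  "a \<in> offline_policies d T \<Longrightarrow> c \<in> {1..d} \<Longrightarrow> a(Suc T := c) \<in> offline_policies d (Suc T)"
  by (auto simp: offline_policies_def PiE_iff extensional_def le_Suc_eq)

lemma exists_offline_policy_pulls_ge:
  fixes N :: "nat \<Rightarrow> nat"
  assumes "d \<ge> 1" "(\<Sum>b\<in>{1..d}. N b) \<le> T"
  shows "\<exists>a\<in>offline_policies d T. \<forall>b\<in>{1..d}. N b \<le> pulls a b T"
  using assms(2)
proof (induction T arbitrary: N)
  case 0
  then show ?case by (intro bexI[of _ "\<lambda>_. undefined"]) (auto simp: offline_policies_def)
next
  case (Suc T)
  obtain c where c: "c \<in> {1..d}" and N_c: "N c > 0 \<or> (\<forall>b\<in>{1..d}. N b = 0)"
    using assms(1) by (metis atLeastAtMost_iff bot_nat_0.not_eq_extremum order_refl)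
  define N' where "N' = N(c := N c - 1)"
  have "(\<Sum>b\<in>{1..d}. N' b) \<le> T"
  proof (cases "N c > 0")
    case True
    have "(\<Sum>b\<in>{1..d}. N' b) = N' c + (\<Sum>b\<in>{1..d} - {c}. N' b)"
      using c by (intro sum.remove) auto
    also have "(\<Sum>b\<in>{1..d} - {c}. N' b) = (\<Sum>b\<in>{1..d} - {c}. N b)"
      by (intro sum.cong) (auto simp: N'_def)
    also have "N' c + (\<Sum>b\<in>{1..d} - {c}. N b) + 1 = (\<Sum>b\<in>{1..d}. N b)"
      using True c by (simp add: N'_def sum.remove)
    finally show ?thesis using Suc.prems by linarith
  next
    case False
    then have "\<forall>b\<in>{1..d}. N' b = 0" using N_c by (simp add: N'_def)
    then show ?thesis by simp
  qed
  then obtain a where a: "a \<in> offline_policies d T" "\<forall>b\<in>{1..d}. N' b \<le> pulls a b T"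
    using Suc.IH by blast
  have "N b \<le> pulls (a(Suc T := c)) b (Suc T)" if "b \<in> {1..d}" for b
    using a(2) that by (auto simp: pulls_Suc pulls_fun_upd_beyond N'_def split: if_splits)
  then show ?case using offline_policy_fun_upd[OF a(1) c] by blast
qed

section \<open>Expectations under the censorship distribution\<close>

lemma finite_set_censor_pmf: "finite (set_pmf (censor_pmf p T a))"
proof (rule finite_subset)
  show "set_pmf (censor_pmf p T a) \<subseteq> PiE_dflt {1..T} False (set_pmf \<circ> (\<lambda>l. bernoulli_pmf (p (a l))))"
    unfolding censor_pmf_def by (rule set_Pi_pmf_subset') simp
qed (intro finite_PiE_dflt; simp)

lemma integrable_censor_pmf [simp]: "integrable (measure_pmf (censor_pmf p T a)) (f :: _ \<Rightarrow> real)"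
  by (rule integrable_measure_pmf_finite[OF finite_set_censor_pmf])

lemma expectation_censor_indicator:
  assumes "l \<in> {1..T}" "0 \<le> p (a l)" "p (a l) \<le> 1"
  shows "measure_pmf.expectation (censor_pmf p T a) (\<lambda>x. of_bool (x l) :: real) = p (a l)"
proof -
  have "map_pmf (\<lambda>x. x l) (censor_pmf p T a) = bernoulli_pmf (p (a l))"
    unfolding censor_pmf_def using assms by (subst Pi_pmf_component) auto
  then have "measure_pmf.expectation (censor_pmf p T a) (\<lambda>x. of_bool (x l) :: real)
      = measure_pmf.expectation (bernoulli_pmf (p (a l))) (\<lambda>v. of_bool v :: real)"
    by (metis integral_map_pmf)
  then show ?thesis using assms by simp
qed

lemma expectation_censor_card:
  assumes "S \<subseteq> {1..T}" "\<And>l. l \<in> S \<Longrightarrow> 0 \<le> p (a l) \<and> p (a l) \<le> 1"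
  shows "measure_pmf.expectation (censor_pmf p T a) (\<lambda>x. real (card {l\<in>S. x l})) = (\<Sum>l\<in>S. p (a l))"
proof -
  have "finite S" using assms(1) finite_subset by blast
  then have "(\<lambda>x. real (card {l\<in>S. x l})) = (\<lambda>x. \<Sum>l\<in>S. of_bool (x l))"
    by (auto simp: fun_eq_iff Int_def)
  then show ?thesis
    using assms by (simp add: Bochner_Integration.integral_sum expectation_censor_indicator subset_eq)
qed

lemma expectation_censor_power_card:
  assumes "S \<subseteq> {1..T}" "\<And>l. l \<in> S \<Longrightarrow> 0 \<le> p (a l) \<and> p (a l) \<le> 1" "0 \<le> u"
  shows "measure_pmf.expectation (censor_pmf p T a) (\<lambda>x. u ^ card {l\<in>S. x l})
         = (\<Prod>l\<in>S. 1 - p (a l) + p (a l) * u)"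
proof -
  define g where "g l = (\<lambda>v. if l \<in> S \<and> v then u else 1)" for l
  have "u ^ card {l\<in>S. x l} = (\<Prod>l\<in>{1..T}. g l (x l))" for x
  proof -
    have "(\<Prod>l\<in>{1..T}. g l (x l)) = (\<Prod>l\<in>{l\<in>{1..T}. l \<in> S \<and> x l}. u)"
      unfolding g_def by (rule prod.inter_filter[symmetric]) simp
    also have "{l\<in>{1..T}. l \<in> S \<and> x l} = {l\<in>S. x l}" using assms(1) by auto
    finally show ?thesis by simp
  qed
  then have "measure_pmf.expectation (censor_pmf p T a) (\<lambda>x. u ^ card {l\<in>S. x l})
     = (\<Prod>l\<in>{1..T}. measure_pmf.expectation (bernoulli_pmf (p (a l))) (g l))"
    unfolding censor_pmf_def
    by (simp only:)
       (rule expectation_prod_Pi_pmf, auto intro: integrable_measure_pmf_finite simp: g_def assms(3))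
  also have "\<dots> = (\<Prod>l\<in>{1..T}. if l \<in> S then 1 - p (a l) + p (a l) * u else 1)"
    using assms(1,2) by (intro prod.cong refl) (auto simp: g_def)
  also have "\<dots> = (\<Prod>l\<in>S. 1 - p (a l) + p (a l) * u)"
    using assms(1) by (simp add: prod.If_cases Int_absorb1)
  finally show ?thesis .
qed

lemma expectation_powr_card_ge:
  assumes "S \<subseteq> {1..T}" "\<And>l. l \<in> S \<Longrightarrow> p (a l) = q" "0 \<le> q" "q \<le> 1" "0 < \<alpha>" "lam > 0"
  shows "(q * real (card S) + lam) powr -\<alpha>
         \<le> measure_pmf.expectation (censor_pmf p T a) (\<lambda>x. (real (card {l\<in>S. x l}) + lam) powr -\<alpha>)"
proof -
  define w where "w = q * real (card S) + lam"
  have w: "w > 0" using assms by (simp add: w_def add_nonneg_pos)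
  have mean: "measure_pmf.expectation (censor_pmf p T a) (\<lambda>x. real (card {l\<in>S. x l})) = w - lam"
    using assms by (simp add: expectation_censor_card w_def)
  have "w powr -\<alpha> = measure_pmf.expectation (censor_pmf p T a)
      (\<lambda>x. w powr -\<alpha> - \<alpha> * w powr (-\<alpha> - 1) * ((real (card {l\<in>S. x l}) + lam) - w))"
    using mean by (simp add: Bochner_Integration.integral_diff Bochner_Integration.integral_add)
  also have "\<dots> \<le> measure_pmf.expectation (censor_pmf p T a) (\<lambda>x. (real (card {l\<in>S. x l}) + lam) powr -\<alpha>)"
    using assms w
    by (intro integral_mono integrable_censor_pmf powr_neg_ge_tangent) (auto simp: add_nonneg_pos)
  finally show ?thesis by (simp add: w_def)
qed

text \<open>Exponential Markov bound: below the threshold \<open>\<theta> q m\<close> one has \<open>\<theta> powr (X - \<theta> q m) \<ge> 1\<close>,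
  and for \<open>X\<close> binomial with parameters \<open>m\<close> and \<open>q\<close> the expectation of this power is
  \<open>tail_ratio \<theta> q ^ m\<close>.\<close>

definition tail_ratio :: "real \<Rightarrow> real \<Rightarrow> real" where
  "tail_ratio \<theta> q = \<theta> powr (-\<theta> * q) * (1 - q + q * \<theta>)"

lemma powr_neg_le_tail_bound:
  fixes \<alpha> c \<theta> lam :: real
  assumes "0 < \<alpha>" "0 < \<theta>" "\<theta> \<le> 1" "lam > 0" "0 \<le> c"
  shows "(real n + lam) powr -\<alpha> \<le> (c + lam) powr -\<alpha> + lam powr -\<alpha> * \<theta> powr (real n - c)"
proof (cases "c \<le> real n")
  case True
  then have "(real n + lam) powr -\<alpha> \<le> (c + lam) powr -\<alpha>"
    using assms by (intro powr_mono2') auto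
  then show ?thesis by (simp add: add_increasing2)
next
  case False
  then have "0 \<le> (real n - c) * ln \<theta>"
    using assms by (intro mult_nonpos_nonpos) auto
  then have "1 \<le> \<theta> powr (real n - c)"
    using assms by (simp add: powr_def)
  then have "lam powr -\<alpha> \<le> lam powr -\<alpha> * \<theta> powr (real n - c)"
    by (simp add: mult_le_cancel_left1)
  moreover have "(real n + lam) powr -\<alpha> \<le> lam powr -\<alpha>"
    using assms by (intro powr_mono2') auto
  ultimately show ?thesis by (smt (verit) powr_ge_zero)
qed

lemma expectation_powr_card_le:
  assumes "S \<subseteq> {1..T}" "\<And>l. l \<in> S \<Longrightarrow> p (a l) = q" "0 \<le> q" "q \<le> 1" "0 < \<alpha>" "lam > 0"
    and "0 < \<theta>" "\<theta> \<le> 1"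
  shows "measure_pmf.expectation (censor_pmf p T a) (\<lambda>x. (real (card {l\<in>S. x l}) + lam) powr -\<alpha>)
         \<le> (\<theta> * q * real (card S) + lam) powr -\<alpha> + lam powr -\<alpha> * tail_ratio \<theta> q ^ card S"
proof -
  define c where "c = \<theta> * q * real (card S)"
  have c: "0 \<le> c" using assms by (simp add: c_def)
  have split_powr: "\<theta> powr (real k - c) = \<theta> powr (- c) * \<theta> ^ k" for k
    using assms by (simp add: powr_diff powr_minus_divide powr_realpow divide_inverse mult.commute)
  have "measure_pmf.expectation (censor_pmf p T a) (\<lambda>x. (real (card {l\<in>S. x l}) + lam) powr -\<alpha>)
      \<le> measure_pmf.expectation (censor_pmf p T a)
          (\<lambda>x. (c + lam) powr -\<alpha> + lam powr -\<alpha> * (\<theta> powr (- c) * \<theta> ^ card {l\<in>S. x l}))"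
    using assms c by (intro integral_mono integrable_censor_pmf)
                     (auto simp: powr_neg_le_tail_bound split_powr[symmetric])
  also have "\<dots> = (c + lam) powr -\<alpha> + lam powr -\<alpha> * (\<theta> powr (- c) * (1 - q + q * \<theta>) ^ card S)"
    using assms by (simp add: expectation_censor_power_card)
  also have "\<theta> powr (- c) = (\<theta> powr (-\<theta> * q)) ^ card S"
    using assms by (simp add: c_def powr_powr powr_realpow[symmetric] mult.assoc)
  finally show ?thesis by (simp add: c_def tail_ratio_def power_mult_distrib)
qed

lemma tail_ratio_pos:
  assumes "0 < \<theta>" "0 \<le> q" "q \<le> 1"
  shows "0 < tail_ratio \<theta> q"
proof -
  have "0 < 1 - q + q * \<theta>"
  proof (cases "q < 1")
    case True
    then show ?thesis using assms by (intro add_pos_nonneg) auto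
  next
    case False
    then show ?thesis using assms by simp
  qed
  then show ?thesis using assms by (simp add: tail_ratio_def)
qed

lemma tail_ratio_less_1:
  assumes "0 < \<theta>" "\<theta> < 1" "0 < q"
  shows "tail_ratio \<theta> q < 1"
proof -
  have "- ln \<theta> < (1 - \<theta>) / \<theta>"
    using ln_diff_less[of 1 \<theta>] assms by simp
  then have "\<theta> - 1 < \<theta> * ln \<theta>"
    using assms by (simp add: field_simps)
  then have "q * (\<theta> - 1) < q * \<theta> * ln \<theta>"
    using assms by (simp add: mult.assoc)
  then have "exp (q * (\<theta> - 1)) < exp (q * \<theta> * ln \<theta>)" by simp
  moreover have "1 - q + q * \<theta> \<le> exp (q * (\<theta> - 1))"
    using exp_ge_add_one_self[of "q * (\<theta> - 1)"] by (simp add: algebra_simps)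
  ultimately have "1 - q + q * \<theta> < exp (q * \<theta> * ln \<theta>)" by linarith
  also have "\<dots> = \<theta> powr (\<theta> * q)"
    using assms by (simp add: powr_def mult_ac)
  finally have "\<theta> powr (-\<theta> * q) * (1 - q + q * \<theta>) < \<theta> powr (-\<theta> * q) * \<theta> powr (\<theta> * q)"
    using assms by simp
  also have "\<dots> = 1"
    using assms by (simp add: powr_add[symmetric])
  finally show ?thesis by (simp add: tail_ratio_def)
qed

section \<open>Bounds for a fixed offline policy\<close>

lemma cnt_eq_card_pulled: "cnt a x b s = card {l \<in> {l\<in>{1..s}. a l = b}. x l}"
  unfolding cnt_def by (rule arg_cong[where f = card]) auto

lemma expected_V_eq_sum:
  "expected_V p \<alpha> lam T a = (\<Sum>t=1..T. measure_pmf.expectation (censor_pmf p T a)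
      (\<lambda>x. (real (cnt a x (a t) (t - 1)) + lam) powr -\<alpha>))"
  unfolding expected_V_def V_def by (simp add: Bochner_Integration.integral_sum)

lemma expected_V_ge_arm_sums:
  assumes "a \<in> offline_policies d T" "\<And>b. b \<in> {1..d} \<Longrightarrow> 0 < p b \<and> p b \<le> 1"
    and "0 < \<alpha>" "lam > 0"
  shows "(\<Sum>b\<in>{1..d}. \<Sum>k < pulls a b T. (p b * real k + lam) powr -\<alpha>) \<le> expected_V p \<alpha> lam T a"
proof -
  have "(\<Sum>b\<in>{1..d}. \<Sum>k < pulls a b T. (p b * real k + lam) powr -\<alpha>)
      = (\<Sum>t=1..T. (p (a t) * real (pulls a (a t) (t - 1)) + lam) powr -\<alpha>)"
    using offline_policy_arm[OF assms(1)] by (intro sum_rounds_by_arm[symmetric]) auto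
  also have "\<dots> \<le> expected_V p \<alpha> lam T a"
    unfolding expected_V_eq_sum
  proof (rule sum_mono)
    fix t assume t: "t \<in> {1..T}"
    have "0 < p (a t) \<and> p (a t) \<le> 1" using assms(2) offline_policy_arm[OF assms(1) t] by blast
    then show "(p (a t) * real (pulls a (a t) (t - 1)) + lam) powr -\<alpha>
        \<le> measure_pmf.expectation (censor_pmf p T a) (\<lambda>x. (real (cnt a x (a t) (t - 1)) + lam) powr -\<alpha>)"
      unfolding pulls_def cnt_eq_card_pulled using t assms(3,4) by (intro expectation_powr_card_ge) auto
  qed
  finally show ?thesis .
qed

lemma expected_V_le_arm_sums:
  assumes "a \<in> offline_policies d T" "\<And>b. b \<in> {1..d} \<Longrightarrow> 0 < p b \<and> p b \<le> 1"
    and "0 < \<alpha>" "lam > 0" "0 < \<theta>" "\<theta> \<le> 1"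
  shows "expected_V p \<alpha> lam T a
      \<le> (\<Sum>b\<in>{1..d}. \<Sum>k < pulls a b T. (\<theta> * p b * real k + lam) powr -\<alpha> + lam powr -\<alpha> * tail_ratio \<theta> (p b) ^ k)"
proof -
  have "expected_V p \<alpha> lam T a
      \<le> (\<Sum>t=1..T. (\<theta> * p (a t) * real (pulls a (a t) (t - 1)) + lam) powr -\<alpha>
            + lam powr -\<alpha> * tail_ratio \<theta> (p (a t)) ^ pulls a (a t) (t - 1))"
    unfolding expected_V_eq_sum
  proof (rule sum_mono)
    fix t assume t: "t \<in> {1..T}"
    have "0 < p (a t) \<and> p (a t) \<le> 1" using assms(2) offline_policy_arm[OF assms(1) t] by blast
    then show "measure_pmf.expectation (censor_pmf p T a) (\<lambda>x. (real (cnt a x (a t) (t - 1)) + lam) powr -\<alpha>)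
        \<le> (\<theta> * p (a t) * real (pulls a (a t) (t - 1)) + lam) powr -\<alpha>
            + lam powr -\<alpha> * tail_ratio \<theta> (p (a t)) ^ pulls a (a t) (t - 1)"
      unfolding pulls_def cnt_eq_card_pulled using t assms(3-6) by (intro expectation_powr_card_le) auto
  qed
  also have "\<dots> = (\<Sum>b\<in>{1..d}. \<Sum>k < pulls a b T. (\<theta> * p b * real k + lam) powr -\<alpha> + lam powr -\<alpha> * tail_ratio \<theta> (p b) ^ k)"
    using offline_policy_arm[OF assms(1)] by (intro sum_rounds_by_arm) auto
  finally show ?thesis .
qed

lemma d_eff_pos:
  assumes "d \<ge> 1" "\<And>b. b \<in> {1..d} \<Longrightarrow> 0 < p b \<and> p b \<le> 1"
  shows "d_eff d p > 0"
  unfolding d_eff_def using assms by (intro sum_pos) auto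

lemma arm_sum_le_psi:
  assumes "0 < \<alpha>" "\<alpha> \<le> 1" "lam > 0" "0 < \<theta>" "\<theta> < 1" "0 < q" "q \<le> 1"
  shows "(\<Sum>k<n. (\<theta> * q * real k + lam) powr -\<alpha> + lam powr -\<alpha> * tail_ratio \<theta> q ^ k)
      \<le> psi \<alpha> (\<theta> * q * real n + lam) / (\<theta> * q)
         + (lam powr -\<alpha> - psi \<alpha> lam / (\<theta> * q) + lam powr -\<alpha> / (1 - tail_ratio \<theta> q))"
proof -
  define r where "r = tail_ratio \<theta> q"
  have r: "0 < r" "r < 1" using assms tail_ratio_pos tail_ratio_less_1 by (auto simp: r_def)
  have "(\<Sum>k<n. r ^ k) = (1 - r ^ n) / (1 - r)"
    using r by (simp add: sum_gp_strict)
  also have "\<dots> \<le> 1 / (1 - r)"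
    using r by (intro divide_right_mono) auto
  finally have "lam powr -\<alpha> * (\<Sum>k<n. r ^ k) \<le> lam powr -\<alpha> / (1 - r)"
    using mult_left_mono[of _ _ "lam powr -\<alpha>"] by fastforce
  moreover have "(\<Sum>k<n. (\<theta> * q * real k + lam) powr -\<alpha>)
      \<le> lam powr -\<alpha> + (psi \<alpha> (\<theta> * q * real n + lam) - psi \<alpha> lam) / (\<theta> * q)"
    using assms by (intro sum_powr_arith_le_psi) auto
  ultimately show ?thesis
    by (simp add: r_def sum.distrib sum_distrib_left diff_divide_distrib)
qed

lemma sum_psi_allocation_le_balanced:
  assumes "d \<ge> 1" "\<And>b. b \<in> {1..d} \<Longrightarrow> 0 < p b \<and> p b \<le> 1"
    and "0 < \<alpha>" "\<alpha> \<le> 1" "lam > 0" "0 < \<theta>" "\<theta> \<le> 1" "(\<Sum>b\<in>{1..d}. n b) = T"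
  shows "(\<Sum>b\<in>{1..d}. psi \<alpha> (\<theta> * p b * real (n b) + lam) / (\<theta> * p b))
         \<le> d_eff d p / \<theta> * psi \<alpha> (real T / d_eff d p + lam)"
proof -
  define D where "D = d_eff d p"
  define w where "w b = 1 / (\<theta> * p b)" for b
  define y where "y b = \<theta> * p b * real (n b) + lam" for b
  have hp: "0 < p b" "p b \<le> 1" if "b \<in> {1..d}" for b using assms(2)[OF that] by auto
  have wy: "w b > 0" "y b > 0" if "b \<in> {1..d}" for b
    using hp[OF that] assms(5,6) by (auto simp: w_def y_def add_nonneg_pos)
  have D: "D > 0" using d_eff_pos[OF assms(1,2)] by (simp add: D_def)
  have W: "sum w {1..d} = D / \<theta>"
    by (simp add: w_def D_def d_eff_def sum_divide_distrib mult.commute)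
  have "(\<Sum>b\<in>{1..d}. w b * y b) = (\<Sum>b\<in>{1..d}. real (n b)) + lam * sum w {1..d}"
    unfolding sum_distrib_left sum.distrib[symmetric]
  proof (intro sum.cong refl)
    fix b assume "b \<in> {1..d}"
    then have "p b > 0" by (rule hp)
    then show "w b * y b = real (n b) + lam * w b"
      using assms(6) by (simp add: w_def y_def field_simps)
  qed
  also have "(\<Sum>b\<in>{1..d}. real (n b)) = real T"
    using assms(8) by (metis of_nat_sum)
  finally have "(\<Sum>b\<in>{1..d}. w b * y b) / sum w {1..d} = (real T + lam * (D / \<theta>)) / (D / \<theta>)"
    by (simp only: W)
  also have "\<dots> = \<theta> * real T / D + lam"
    using D assms(6) by (simp add: field_simps)
  finally have mean: "(\<Sum>b\<in>{1..d}. w b * y b) / sum w {1..d} = \<theta> * real T / D + lam" .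
  have "(\<Sum>b\<in>{1..d}. w b * psi \<alpha> (y b))
      \<le> sum w {1..d} * psi \<alpha> ((\<Sum>b\<in>{1..d}. w b * y b) / sum w {1..d})"
    using assms wy by (intro psi_weighted_jensen) auto
  also have "\<dots> = D / \<theta> * psi \<alpha> (\<theta> * real T / D + lam)"
    unfolding mean unfolding W ..
  also have "\<dots> \<le> D / \<theta> * psi \<alpha> (real T / D + lam)"
    using assms D
    by (intro mult_left_mono psi_mono) (auto simp: add_nonneg_pos divide_right_mono mult_left_le_one_le)
  finally show ?thesis by (simp add: w_def y_def D_def)
qed

lemma expected_V_upper:
  assumes "d \<ge> 1" "\<And>b. b \<in> {1..d} \<Longrightarrow> 0 < p b \<and> p b \<le> 1"
    and "0 < \<alpha>" "\<alpha> \<le> 1" "lam > 0" "0 < \<theta>" "\<theta> < 1"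
  shows "\<exists>K. \<forall>T. \<forall>a\<in>offline_policies d T.
           expected_V p \<alpha> lam T a \<le> d_eff d p / \<theta> * psi \<alpha> (real T / d_eff d p + lam) + K"
proof (intro exI allI ballI)
  fix T a assume a: "a \<in> offline_policies d T"
  define K where "K b = lam powr -\<alpha> - psi \<alpha> lam / (\<theta> * p b) + lam powr -\<alpha> / (1 - tail_ratio \<theta> (p b))"
    for b
  have "expected_V p \<alpha> lam T a \<le> (\<Sum>b\<in>{1..d}. \<Sum>k < pulls a b T.
      (\<theta> * p b * real k + lam) powr -\<alpha> + lam powr -\<alpha> * tail_ratio \<theta> (p b) ^ k)"
    using assms by (intro expected_V_le_arm_sums[OF a]) auto
  also have "\<dots> \<le> (\<Sum>b\<in>{1..d}. psi \<alpha> (\<theta> * p b * real (pulls a b T) + lam) / (\<theta> * p b) + K b)"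
    unfolding K_def using assms by (intro sum_mono arm_sum_le_psi) auto
  also have "\<dots> = (\<Sum>b\<in>{1..d}. psi \<alpha> (\<theta> * p b * real (pulls a b T) + lam) / (\<theta> * p b)) + sum K {1..d}"
    by (rule sum.distrib)
  also have "\<dots> \<le> d_eff d p / \<theta> * psi \<alpha> (real T / d_eff d p + lam) + sum K {1..d}"
    using assms sum_pulls_offline_policy[OF a] by (intro add_right_mono sum_psi_allocation_le_balanced) auto
  finally show "expected_V p \<alpha> lam T a \<le> d_eff d p / \<theta> * psi \<alpha> (real T / d_eff d p + lam) + sum K {1..d}" .
qed

lemma sum_floor_quotas_le:
  assumes "d \<ge> 1" "\<And>b. b \<in> {1..d} \<Longrightarrow> 0 < p b \<and> p b \<le> 1"
  shows "(\<Sum>b\<in>{1..d}. nat \<lfloor>real T / (d_eff d p * p b)\<rfloor>) \<le> T"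
proof -
  have D: "d_eff d p > 0" using d_eff_pos[OF assms] .
  have "real (\<Sum>b\<in>{1..d}. nat \<lfloor>real T / (d_eff d p * p b)\<rfloor>) \<le> (\<Sum>b\<in>{1..d}. real T / (d_eff d p * p b))"
    unfolding of_nat_sum
  proof (rule sum_mono)
    fix b assume "b \<in> {1..d}"
    then have "0 \<le> real T / (d_eff d p * p b)" using assms(2) D by (simp add: less_imp_le)
    then show "real (nat \<lfloor>real T / (d_eff d p * p b)\<rfloor>) \<le> real T / (d_eff d p * p b)"
      by (simp add: of_nat_floor)
  qed
  also have "\<dots> = real T / d_eff d p * d_eff d p"
    by (simp add: d_eff_def sum_distrib_left)
  also have "\<dots> = real T"
    using D by simp
  finally show ?thesis by linarith
qed

lemma sum_powr_arith_ge_psi_quota: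
  assumes "0 < \<alpha>" "\<alpha> \<le> 1" "lam > 0" "0 < q" "q \<le> 1" "0 < D" "D \<le> real T"
    and "nat \<lfloor>real T / (D * q)\<rfloor> \<le> n"
  shows "(psi \<alpha> (real T / D - 1 + lam) - psi \<alpha> lam) / q \<le> (\<Sum>k<n. (q * real k + lam) powr -\<alpha>)"
proof -
  define N where "N = nat \<lfloor>real T / (D * q)\<rfloor>"
  have "real T / (D * q) - 1 \<le> real N" unfolding N_def by linarith
  then have "q * (real T / (D * q) - 1) \<le> q * real N"
    using assms by (intro mult_left_mono) auto
  moreover have "q * (real T / (D * q) - 1) = real T / D - q"
    using assms by (simp add: field_simps)
  moreover have "1 \<le> real T / D" using assms by simp
  then have "0 < real T / D - 1 + lam" using assms(3) by linarith
  ultimately have "psi \<alpha> (real T / D - 1 + lam) \<le> psi \<alpha> (q * real N + lam)"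
    using assms by (intro psi_mono) auto
  then have "(psi \<alpha> (real T / D - 1 + lam) - psi \<alpha> lam) / q \<le> (psi \<alpha> (q * real N + lam) - psi \<alpha> lam) / q"
    using assms by (simp add: divide_right_mono)
  also have "\<dots> \<le> (\<Sum>k < N. (q * real k + lam) powr -\<alpha>)"
    using assms by (intro sum_powr_arith_ge_psi) auto
  also have "\<dots> \<le> (\<Sum>k < n. (q * real k + lam) powr -\<alpha>)"
    using assms(8) by (intro sum_mono2) (auto simp: N_def)
  finally show ?thesis .
qed

lemma expected_V_lower:
  assumes "d \<ge> 1" "\<And>b. b \<in> {1..d} \<Longrightarrow> 0 < p b \<and> p b \<le> 1"
    and "0 < \<alpha>" "\<alpha> \<le> 1" "lam > 0" "d_eff d p \<le> real T"
  shows "\<exists>a\<in>offline_policies d T. d_eff d p * psi \<alpha> (real T / d_eff d p + lam)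
           - d_eff d p * (lam powr -\<alpha> + psi \<alpha> lam) \<le> expected_V p \<alpha> lam T a"
proof -
  define D where "D = d_eff d p"
  define x where "x = real T / D - 1 + lam"
  have D: "D > 0" "D \<le> real T" using d_eff_pos[OF assms(1,2)] assms(6) by (simp_all add: D_def)
  have x: "lam \<le> x" using D by (simp add: x_def field_simps)
  then have x_pos: "0 < x" using assms(5) by linarith
  obtain a where a: "a \<in> offline_policies d T"
    and quota: "\<And>b. b \<in> {1..d} \<Longrightarrow> nat \<lfloor>real T / (D * p b)\<rfloor> \<le> pulls a b T"
    using exists_offline_policy_pulls_ge[OF assms(1) sum_floor_quotas_le[of d p T, OF assms(1,2)]]
    unfolding D_def by blast
  have "psi \<alpha> (real T / D + lam) \<le> psi \<alpha> x + x powr -\<alpha> * 1"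
    using psi_le_tangent[of \<alpha> x "real T / D + lam"] assms x_pos D by (simp add: x_def)
  also have "x powr -\<alpha> \<le> lam powr -\<alpha>"
    using assms x by (intro powr_mono2') auto
  finally have "D * psi \<alpha> (real T / D + lam) \<le> D * (psi \<alpha> x + lam powr -\<alpha>)"
    using D by (simp add: mult_left_mono)
  then have "D * psi \<alpha> (real T / D + lam) - D * (lam powr -\<alpha> + psi \<alpha> lam) \<le> D * (psi \<alpha> x - psi \<alpha> lam)"
    by (simp add: algebra_simps)
  also have "\<dots> = (\<Sum>b\<in>{1..d}. (psi \<alpha> x - psi \<alpha> lam) / p b)"
    by (simp add: D_def d_eff_def sum_distrib_right)
  also have "\<dots> \<le> (\<Sum>b\<in>{1..d}. \<Sum>k < pulls a b T. (p b * real k + lam) powr -\<alpha>)"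
    using assms(2,3,4,5) D quota unfolding x_def by (intro sum_mono sum_powr_arith_ge_psi_quota) auto
  also have "\<dots> \<le> expected_V p \<alpha> lam T a"
    using assms by (intro expected_V_ge_arm_sums[OF a]) auto
  finally show ?thesis using a by (auto simp: D_def)
qed

section \<open>Asymptotics\<close>

lemma asymp_equiv_sandwich:
  fixes f g :: "'a \<Rightarrow> real"
  assumes g: "filterlim g at_top F"
    and lower: "eventually (\<lambda>x. g x - C \<le> f x) F"
    and upper: "\<And>\<theta>. 0 < \<theta> \<Longrightarrow> \<theta> < 1 \<Longrightarrow> \<exists>K. eventually (\<lambda>x. f x \<le> g x / \<theta> + K) F"
  shows "f \<sim>[F] g"
proof -
  have g_large: "eventually (\<lambda>x. Z < g x) F" for Z
    using g by (simp add: filterlim_at_top_dense)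
  show ?thesis
  proof (rule asymp_equivI', rule order_tendstoI)
    fix l :: real assume l: "l < 1"
    show "eventually (\<lambda>x. l < f x / g x) F"
      using g_large[of "max 0 (C / (1 - l))"] lower
    proof eventually_elim
      case (elim x)
      then have "C < (1 - l) * g x" "0 < g x" using l by (auto simp: field_simps)
      then show ?case using elim(2) by (simp add: field_simps)
    qed
  next
    fix u :: real assume u: "u > 1"
    define \<theta> where "\<theta> = 2 / (1 + u)"
    obtain K where K: "eventually (\<lambda>x. f x \<le> g x / \<theta> + K) F"
      using upper[of \<theta>] u by (auto simp: \<theta>_def)
    show "eventually (\<lambda>x. f x / g x < u) F"
      using g_large[of "max 0 (2 * K / (u - 1))"] K
    proof eventually_elim
      case (elim x)
      then have "2 * K < (u - 1) * g x" "0 < g x" "f x \<le> (1 + u) / 2 * g x + K"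
        using u by (auto simp: field_simps \<theta>_def)
      then show ?case by (simp add: field_simps)
    qed
  qed
qed

lemma offline_policies_nonempty: "d \<ge> 1 \<Longrightarrow> offline_policies d T \<noteq> {}"
  by (simp add: offline_policies_def PiE_eq_empty_iff)

lemma max_offline_upper:
  assumes "d \<ge> 1" "\<And>b. b \<in> {1..d} \<Longrightarrow> 0 < p b \<and> p b \<le> 1"
    and "0 < \<alpha>" "\<alpha> \<le> 1" "lam > 0" "0 < \<theta>" "\<theta> < 1"
  shows "\<exists>K. \<forall>T. max_offline d p \<alpha> lam T \<le> d_eff d p * psi \<alpha> (real T / d_eff d p + lam) / \<theta> + K"
proof -
  obtain K where "\<forall>T. \<forall>a\<in>offline_policies d T.
      expected_V p \<alpha> lam T a \<le> d_eff d p / \<theta> * psi \<alpha> (real T / d_eff d p + lam) + K"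
    using expected_V_upper[of d p, OF assms] by blast
  then show ?thesis
    using finite_offline_policies offline_policies_nonempty[OF assms(1)]
    by (auto simp: max_offline_def)
qed

lemma max_offline_lower:
  assumes "d \<ge> 1" "\<And>b. b \<in> {1..d} \<Longrightarrow> 0 < p b \<and> p b \<le> 1"
    and "0 < \<alpha>" "\<alpha> \<le> 1" "lam > 0" "d_eff d p \<le> real T"
  shows "d_eff d p * psi \<alpha> (real T / d_eff d p + lam) - d_eff d p * (lam powr -\<alpha> + psi \<alpha> lam)
         \<le> max_offline d p \<alpha> lam T"
proof -
  obtain a where "a \<in> offline_policies d T" and "d_eff d p * psi \<alpha> (real T / d_eff d p + lam)
      - d_eff d p * (lam powr -\<alpha> + psi \<alpha> lam) \<le> expected_V p \<alpha> lam T a"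
    using expected_V_lower[of d p, OF assms] by blast
  then show ?thesis
    using finite_offline_policies unfolding max_offline_def by (meson Max_ge finite_imageI image_eqI order.trans)
qed

theorem lemma3:
  fixes d :: nat and p :: "nat \<Rightarrow> real" and \<alpha> lam :: real
  assumes "d \<ge> 1"
    and "\<And>a. a \<in> {1..d} \<Longrightarrow> 0 < p a \<and> p a \<le> 1"
    and "lam > 0"
    and "0 < \<alpha>" and "\<alpha> \<le> 1"
  shows "(\<lambda>T. max_offline d p \<alpha> lam T) \<sim>[at_top]
         (\<lambda>T. d_eff d p * psi \<alpha> (real T / d_eff d p + lam))"
proof (rule asymp_equiv_sandwich)
  have D: "d_eff d p > 0" using d_eff_pos[OF assms(1,2)] .
  have "filterlim (\<lambda>T. lam + real T * (1 / d_eff d p)) at_top sequentially"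
    using D by (intro filterlim_tendsto_add_at_top[OF tendsto_const]
        filterlim_at_top_mult_tendsto_pos[OF tendsto_const] filterlim_real_sequentially) simp
  then have "filterlim (\<lambda>T. real T / d_eff d p + lam) at_top at_top"
    by (simp add: add.commute)
  then have "filterlim (\<lambda>T. psi \<alpha> (real T / d_eff d p + lam)) at_top at_top"
    by (rule filterlim_compose[OF filterlim_psi_at_top[OF assms(4,5)]])
  then show "filterlim (\<lambda>T. d_eff d p * psi \<alpha> (real T / d_eff d p + lam)) at_top at_top"
    using D by (intro filterlim_tendsto_pos_mult_at_top[OF tendsto_const])
  have "eventually (\<lambda>T. d_eff d p \<le> real T) at_top"
    using eventually_ge_at_top[of "nat \<lceil>d_eff d p\<rceil>"] by eventually_elim linarith
  then show "eventually (\<lambda>T. d_eff d p * psi \<alpha> (real T / d_eff d p + lam)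
      - d_eff d p * (lam powr -\<alpha> + psi \<alpha> lam) \<le> max_offline d p \<alpha> lam T) at_top"
    by eventually_elim (rule max_offline_lower[of d p, OF assms(1,2,4,5,3)])
next
  fix \<theta> :: real assume "0 < \<theta>" "\<theta> < 1"
  then obtain K where "\<forall>T. max_offline d p \<alpha> lam T \<le> d_eff d p * psi \<alpha> (real T / d_eff d p + lam) / \<theta> + K"
    using max_offline_upper[of d p, OF assms(1,2,4,5,3)] by blast
  then show "\<exists>K. eventually (\<lambda>T. max_offline d p \<alpha> lam T
      \<le> d_eff d p * psi \<alpha> (real T / d_eff d p + lam) / \<theta> + K) at_top"
    using always_eventually by blast
qed

end
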